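(* Assume the set $\mathcal{F}:=\{x\in\mathbb{R}^n:\|Ax-b\|_2\le\epsilon,\ \|x\|_2\le d\}$ is nonempty. Let $(\lambda_k)_{k\in\mathbb{N}}$ be a decreasing sequence of positive numbers with $\lambda_k\to0$, and for each $k$ let $x^k$ be an optimal solution of $\min\{Q_{\lambda_k}(x):x\in\mathbb{R}^n\}$. Then: (i) $(x^k)$ is bounded; (ii) every accumulation point $x^\star$ of $(x^k)$ satisfies $x^\star\in D$ and $Ax^\star\in C$; (iii) every accumulation point $x^\star$ of $(x^k)$ is an optimal solution of $\min\{\|x\|_1/\|x\|_2: x\in\mathcal{F}\}$.
   Context: Let $A\in\mathbb{R}^{m\times n}$, $b\in\mathbb{R}^m$, $\epsilon\ge 0$ with $\|b\|_2>\epsilon$, and $d>0$. $C:=\{y\in\mathbb{R}^m:\|y-b\|_2\le\epsilon\}$, $D:=\{x\in\mathbb{R}^n:\|x\|_2\le d\}$, $\mathrm{env}(y):=\frac12\big((\|y-b\|_2-\epsilon)_+\big)^2$ for $y\in\mathbb{R}^m$. For $\lambda>0$, $Q_\lambda(x):=(\lambda\|x\|_1+\mathrm{env}(Ax))/\|x\|_2$ if $x\in D\setminus\{0_n\}$ and $Q_\lambda(x):=+\infty$ otherwise. *)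

theory Defs
  imports "HOL-Analysis.Analysis"
begin

definition l1norm :: "real^'n \<Rightarrow> real" where
  "l1norm x = (\<Sum>i\<in>UNIV. \<bar>x $ i\<bar>)"

definition env :: "real^'m \<Rightarrow> real \<Rightarrow> real^'m \<Rightarrow> real" where
  "env b \<epsilon> y = (1/2) * (max (norm (y - b) - \<epsilon>) 0)^2"

definition Qlam :: "real^'n^'m \<Rightarrow> real^'m \<Rightarrow> real \<Rightarrow> real \<Rightarrow> real \<Rightarrow> real^'n \<Rightarrow> ereal" where
  "Qlam A b \<epsilon> d lam x =
     (if norm x \<le> d \<and> x \<noteq> 0
      then ereal ((lam * l1norm x + env b \<epsilon> (A *v x)) / norm x)
      else \<infinity>)"

definition feasible :: "real^'n^'m \<Rightarrow> real^'m \<Rightarrow> real \<Rightarrow> real \<Rightarrow> (real^'n) set" where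
  "feasible A b \<epsilon> d = {x. norm (A *v x - b) \<le> \<epsilon> \<and> norm x \<le> d}"

end

theory Submission
  imports Defs
begin

text \<open>On the feasible set the envelope vanishes, so \<open>Q\<^sub>\<lambda>\<close> there equals \<open>\<lambda>\<close> times the
  ratio \<open>\<parallel>x\<parallel>\<^sub>1/\<parallel>x\<parallel>\<^sub>2\<close>. Comparing a minimiser \<open>x\<^sup>k\<close> with one fixed feasible point \<open>y\<close>
  therefore gives \<open>\<parallel>x\<^sup>k\<parallel>\<^sub>2 \<le> d\<close>, the ratio bound \<open>\<parallel>x\<^sup>k\<parallel>\<^sub>1/\<parallel>x\<^sup>k\<parallel>\<^sub>2 \<le> \<parallel>y\<parallel>\<^sub>1/\<parallel>y\<parallel>\<^sub>2\<close>
  and \<open>env(Ax\<^sup>k) \<le> d \<lambda>\<^sub>k \<parallel>y\<parallel>\<^sub>1/\<parallel>y\<parallel>\<^sub>2\<close>. As \<open>\<lambda>\<^sub>k \<rightarrow> 0\<close>, the envelope of every limit point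
  vanishes, so limit points are feasible, and the ratio bound passes to the limit because a
  feasible point is nonzero (\<open>\<parallel>b\<parallel>\<^sub>2 > \<epsilon>\<close>).\<close>

definition l1_l2_ratio :: "real^'n \<Rightarrow> real" where
  "l1_l2_ratio x = l1norm x / norm x"

lemma l1norm_nonneg: "l1norm x \<ge> 0"
  unfolding l1norm_def by (simp add: sum_nonneg)

lemma l1_l2_ratio_nonneg: "l1_l2_ratio x \<ge> 0"
  unfolding l1_l2_ratio_def by (simp add: l1norm_nonneg)

lemma tendsto_l1norm: "f \<longlonglongrightarrow> l \<Longrightarrow> (\<lambda>k. l1norm (f k)) \<longlonglongrightarrow> l1norm l"
  unfolding l1norm_def by (intro tendsto_intros)

lemma tendsto_l1_l2_ratio:
  "f \<longlonglongrightarrow> l \<Longrightarrow> l \<noteq> 0 \<Longrightarrow> (\<lambda>k. l1_l2_ratio (f k)) \<longlonglongrightarrow> l1_l2_ratio l"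
  unfolding l1_l2_ratio_def by (intro tendsto_divide tendsto_l1norm tendsto_norm) auto

lemma env_nonneg: "env b \<epsilon> y \<ge> 0"
  unfolding env_def by simp

lemma env_le_0_iff: "env b \<epsilon> y \<le> 0 \<longleftrightarrow> norm (y - b) \<le> \<epsilon>"
  unfolding env_def by (auto simp: max_def)

lemma tendsto_env_mult:
  "f \<longlonglongrightarrow> l \<Longrightarrow> (\<lambda>k. env b \<epsilon> (A *v f k)) \<longlonglongrightarrow> env b \<epsilon> (A *v l)"
  unfolding env_def
  by (intro tendsto_intros bounded_linear.tendsto[OF matrix_vector_mul_bounded_linear])

lemma feasible_nonzero:
  assumes "norm b > \<epsilon>" and "y \<in> feasible A b \<epsilon> d"
  shows "y \<noteq> 0"
  using assms by (auto simp: feasible_def)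

lemma Qlam_feasible:
  assumes "norm b > \<epsilon>" and "y \<in> feasible A b \<epsilon> d"
  shows "Qlam A b \<epsilon> d lam y = ereal (lam * l1_l2_ratio y)"
proof -
  have "env b \<epsilon> (A *v y) = 0"
    using assms(2) env_nonneg[of b \<epsilon> "A *v y"] env_le_0_iff[of b \<epsilon> "A *v y"]
    by (simp add: feasible_def)
  then show ?thesis
    using assms feasible_nonzero[OF assms] by (simp add: Qlam_def feasible_def l1_l2_ratio_def)
qed

lemma Qlam_le_feasible:
  assumes "lam > 0" and "norm b > \<epsilon>" and "y \<in> feasible A b \<epsilon> d"
    and le: "Qlam A b \<epsilon> d lam x \<le> Qlam A b \<epsilon> d lam y"
  shows "norm x \<le> d" and "x \<noteq> 0"
    and "l1_l2_ratio x \<le> l1_l2_ratio y"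
    and "env b \<epsilon> (A *v x) \<le> d * l1_l2_ratio y * lam"
proof -
  have x: "norm x \<le> d \<and> x \<noteq> 0 \<and>
      (lam * l1norm x + env b \<epsilon> (A *v x)) / norm x \<le> lam * l1_l2_ratio y"
    using le Qlam_feasible[OF assms(2,3)] by (auto simp: Qlam_def split: if_splits)
  then show "norm x \<le> d" and "x \<noteq> 0" by auto
  then have nx: "norm x > 0" by simp
  have "lam * l1_l2_ratio x \<le> (lam * l1norm x + env b \<epsilon> (A *v x)) / norm x"
    using nx env_nonneg[of b \<epsilon>] by (simp add: l1_l2_ratio_def divide_right_mono)
  with x have "lam * l1_l2_ratio x \<le> lam * l1_l2_ratio y" by linarith
  then show "l1_l2_ratio x \<le> l1_l2_ratio y"
    using \<open>lam > 0\<close> by simp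
  have "env b \<epsilon> (A *v x) / norm x \<le> (lam * l1norm x + env b \<epsilon> (A *v x)) / norm x"
    using nx l1norm_nonneg[of x] \<open>lam > 0\<close> by (simp add: divide_right_mono)
  with x have "env b \<epsilon> (A *v x) / norm x \<le> lam * l1_l2_ratio y" by linarith
  then have "env b \<epsilon> (A *v x) \<le> norm x * (lam * l1_l2_ratio y)"
    using nx by (simp add: divide_le_eq mult.commute)
  also have "\<dots> \<le> d * (lam * l1_l2_ratio y)"
    using x \<open>lam > 0\<close> l1_l2_ratio_nonneg[of y] by (intro mult_right_mono) auto
  finally show "env b \<epsilon> (A *v x) \<le> d * l1_l2_ratio y * lam"
    by (simp add: ac_simps)
qed

lemma limit_in_feasible:
  assumes "strict_mono r" and lim: "(x \<circ> r) \<longlonglongrightarrow> xs" and "lam \<longlonglongrightarrow> 0"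
    and "\<And>k. norm (x k) \<le> d" and "\<And>k. env b \<epsilon> (A *v x k) \<le> c * lam k"
  shows "xs \<in> feasible A b \<epsilon> d"
proof -
  have "norm xs \<le> d"
    using assms(4) by (intro tendsto_upperbound[OF tendsto_norm[OF lim]]) auto
  have "(\<lambda>k. c * (lam \<circ> r) k) \<longlonglongrightarrow> c * 0"
    by (intro tendsto_intros LIMSEQ_subseq_LIMSEQ assms(1,3))
  then have "env b \<epsilon> (A *v xs) \<le> 0"
    using assms(5) by (intro tendsto_le[OF _ _ tendsto_env_mult[OF lim]]) auto
  with \<open>norm xs \<le> d\<close> show ?thesis
    by (simp add: feasible_def env_le_0_iff)
qed

theorem mainTheorem3:
  fixes A :: "real^'n^'m" and b :: "real^'m" and \<epsilon> d :: real
    and lam :: "nat \<Rightarrow> real" and x :: "nat \<Rightarrow> real^'n"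
  assumes "\<epsilon> \<ge> 0" and "norm b > \<epsilon>" and "d > 0"
    and "feasible A b \<epsilon> d \<noteq> {}"
    and "decseq lam" and "\<And>k. lam k > 0" and "lam \<longlonglongrightarrow> 0"
    and "\<And>k y. Qlam A b \<epsilon> d (lam k) (x k) \<le> Qlam A b \<epsilon> d (lam k) y"
  shows "bounded (range x) \<and>
         (\<forall>xs r. strict_mono r \<and> (x \<circ> r) \<longlonglongrightarrow> xs \<longrightarrow>
            norm xs \<le> d \<and> norm (A *v xs - b) \<le> \<epsilon>) \<and>
         (\<forall>xs r. strict_mono r \<and> (x \<circ> r) \<longlonglongrightarrow> xs \<longrightarrow>
            xs \<in> feasible A b \<epsilon> d \<and>
            (\<forall>y\<in>feasible A b \<epsilon> d. l1norm xs / norm xs \<le> l1norm y / norm y))"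
proof -
  note bounds = Qlam_le_feasible[OF assms(6) assms(2) _ assms(8)]
  obtain y0 where y0: "y0 \<in> feasible A b \<epsilon> d" using assms(4) by blast
  have "bounded (range x)"
    unfolding bounded_iff using bounds(1)[OF y0] by blast
  moreover have lim_feasible: "xs \<in> feasible A b \<epsilon> d"
    if "strict_mono r" "(x \<circ> r) \<longlonglongrightarrow> xs" for xs r
    using limit_in_feasible[OF that assms(7) bounds(1)[OF y0] bounds(4)[OF y0]] .
  moreover have "l1_l2_ratio xs \<le> l1_l2_ratio y"
    if "strict_mono r" "(x \<circ> r) \<longlonglongrightarrow> xs" "y \<in> feasible A b \<epsilon> d" for xs r y
    using bounds(3)[OF that(3)] feasible_nonzero[OF assms(2) lim_feasible[OF that(1,2)]]
    by (intro tendsto_upperbound[OF tendsto_l1_l2_ratio[OF that(2)]]) auto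
  ultimately show ?thesis
    by (auto simp: feasible_def l1_l2_ratio_def)
qed

end
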